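(* Let $\varrho\in C^2(\mathbb{C};\mathbb{C})$ be neither holomorphic, nor antiholomorphic, nor $\mathbb{R}$-affine. Let $K\subseteq\mathbb{C}$ be compact and $\varepsilon>0$. Then there are $\mathbb{C}$-affine maps $\phi:\mathbb{C}\to\mathbb{C}^2$ and $\psi:\mathbb{C}^2\to\mathbb{C}^2$ such that $\sup_{z\in K}\|(\psi\circ\varrho^{\times2}\circ\phi)(z)-(z,\overline{z})\|_{\mathbb{C}^2}<\varepsilon$.
   Context: $\varrho$ is antiholomorphic if $\overline{\varrho}$ is holomorphic; $\varrho$ is $\mathbb{R}$-affine if it is affine as a map $\mathbb{R}^2\to\mathbb{R}^2$ under $\mathbb{C}\cong\mathbb{R}^2$. A map $\mathbb{C}^a\to\mathbb{C}^b$ is $\mathbb{C}$-affine if it has the form $z\mapsto Az+b$ with complex $A,b$. $\varrho^{\times2}(z_1,z_2)=(\varrho(z_1),\varrho(z_2))$. *)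

theory Defs
  imports "HOL-Analysis.Analysis"
begin

definition C2_real :: "(complex \<Rightarrow> complex) \<Rightarrow> bool" where
  "C2_real f \<longleftrightarrow> (\<exists>D :: complex \<Rightarrow> (complex \<Rightarrow>\<^sub>L complex).
      \<exists>D2 :: complex \<Rightarrow> (complex \<Rightarrow>\<^sub>L (complex \<Rightarrow>\<^sub>L complex)).
        (\<forall>x. (f has_derivative blinfun_apply (D x)) (at x)) \<and>
        (\<forall>x. (D has_derivative blinfun_apply (D2 x)) (at x)) \<and>
        continuous_on UNIV D2)"

definition antiholomorphic_on :: "(complex \<Rightarrow> complex) \<Rightarrow> complex set \<Rightarrow> bool" where
  "antiholomorphic_on f S \<longleftrightarrow> (\<lambda>z. cnj (f z)) holomorphic_on S"

definition real_affine_map :: "(complex \<Rightarrow> complex) \<Rightarrow> bool" where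
  "real_affine_map f \<longleftrightarrow> (\<exists>L b. linear L \<and> (\<forall>z. f z = L z + b))"

definition C_affine_1_2 :: "(complex \<Rightarrow> complex \<times> complex) \<Rightarrow> bool" where
  "C_affine_1_2 \<phi> \<longleftrightarrow> (\<exists>a1 a2 b1 b2. \<forall>z. \<phi> z = (a1 * z + b1, a2 * z + b2))"

definition C_affine_2_2 :: "(complex \<times> complex \<Rightarrow> complex \<times> complex) \<Rightarrow> bool" where
  "C_affine_2_2 \<psi> \<longleftrightarrow> (\<exists>a11 a12 a21 a22 b1 b2. \<forall>z w.
      \<psi> (z, w) = (a11 * z + a12 * w + b1, a21 * z + a22 * w + b2))"

definition pair_map :: "(complex \<Rightarrow> complex) \<Rightarrow> complex \<times> complex \<Rightarrow> complex \<times> complex" where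
  "pair_map f = (\<lambda>(z1, z2). (f z1, f z2))"

end

theory Submission
  imports Defs
begin

text \<open>Where the real derivative of \<open>\<rho>\<close> at \<open>b\<close> is \<open>w \<mapsto> A w + B cnj w\<close>, the difference
  quotients \<open>(\<rho>(b + t w) - \<rho>(b)) / t\<close> converge to \<open>A w + B cnj w\<close> uniformly on \<open>K\<close> as
  \<open>t \<rightarrow> 0\<^sup>+\<close>, and each quotient is a \<open>\<complex>\<close>-affine function of \<open>\<rho>\<close> evaluated along a
  \<open>\<complex>\<close>-affine map. Since \<open>\<rho>\<close> is neither holomorphic nor antiholomorphic, \<open>B \<noteq> 0\<close> at some
  point and \<open>A \<noteq> 0\<close> at some point. Hence either two points have linearly independent
  coefficient vectors \<open>(A, B)\<close>, or one point has \<open>A B \<noteq> 0\<close> and the directions \<open>1\<close> and \<open>\<i>\<close>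
  there give the independent vectors \<open>(A, B)\<close> and \<open>(\<i> A, -\<i> B)\<close>. Inverting this \<open>2 \<times> 2\<close>
  system with \<open>\<psi>\<close> recovers \<open>(z, cnj z)\<close>.\<close>

definition wirtinger_z :: "(complex \<Rightarrow> complex) \<Rightarrow> complex" where
  "wirtinger_z L = (L 1 - \<i> * L \<i>) / 2"

definition wirtinger_zbar :: "(complex \<Rightarrow> complex) \<Rightarrow> complex" where
  "wirtinger_zbar L = (L 1 + \<i> * L \<i>) / 2"

lemma linear_eq_wirtinger:
  assumes "linear L"
  shows "L w = wirtinger_z L * w + wirtinger_zbar L * cnj w"
proof -
  have w: "w = Re w *\<^sub>R 1 + Im w *\<^sub>R \<i>"
    by (simp add: complex_eq_iff)
  have "L w = Re w *\<^sub>R L 1 + Im w *\<^sub>R L \<i>"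
    by (subst w) (simp add: linear_add[OF assms] linear_scale[OF assms])
  also have "\<dots> = wirtinger_z L * w + wirtinger_zbar L * cnj w"
    unfolding wirtinger_z_def wirtinger_zbar_def
    by (subst (3 4) w) (simp add: scaleR_conv_of_real field_simps)
  finally show ?thesis .
qed

lemma holomorphic_if_wirtinger_zbar_zero:
  assumes "\<And>x. (f has_derivative L x) (at x)" and "\<And>x. wirtinger_zbar (L x) = 0"
  shows "f holomorphic_on UNIV"
  unfolding holomorphic_on_def field_differentiable_def has_field_derivative_def
proof
  fix x
  have "L x = (*) (wirtinger_z (L x))"
    using linear_eq_wirtinger[OF has_derivative_linear[OF assms(1)]] assms(2)
    by (auto simp: fun_eq_iff mult.commute)
  then show "\<exists>f'. (f has_derivative (*) f') (at x within UNIV)"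
    using assms(1)[of x] by metis
qed

lemma antiholomorphic_if_wirtinger_z_zero:
  assumes "\<And>x. (f has_derivative L x) (at x)" and "\<And>x. wirtinger_z (L x) = 0"
  shows "antiholomorphic_on f UNIV"
  unfolding antiholomorphic_on_def holomorphic_on_def field_differentiable_def
    has_field_derivative_def
proof
  fix x
  have "(\<lambda>w. cnj (L x w)) = (*) (cnj (wirtinger_zbar (L x)))"
    using linear_eq_wirtinger[OF has_derivative_linear[OF assms(1)]] assms(2)
    by (auto simp: fun_eq_iff)
  then show "\<exists>f'. ((\<lambda>z. cnj (f z)) has_derivative (*) f') (at x within UNIV)"
    using has_derivative_cnj[OF assms(1)[of x]] by metis
qed

lemma has_derivative_uniform_rescaling:
  fixes f :: "'a::real_normed_vector \<Rightarrow> 'b::real_normed_vector"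
  assumes "(f has_derivative L) (at b)" and "bounded K" and "\<eta> > 0"
  shows "\<forall>\<^sub>F t in at_right 0. \<forall>z\<in>K. norm ((f (b + t *\<^sub>R z) - f b) /\<^sub>R t - L z) \<le> \<eta>"
proof -
  obtain M where M: "M > 0" "\<And>z. z \<in> K \<Longrightarrow> norm z \<le> M"
    using assms(2) bounded_pos by blast
  obtain \<delta> where \<delta>: "\<delta> > 0"
    "\<And>y. norm (y - b) < \<delta> \<Longrightarrow> norm (f y - f b - L (y - b)) \<le> \<eta> / M * norm (y - b)"
    using assms(1) assms(3) M(1) unfolding has_derivative_at_alt by (meson divide_pos_pos)
  have "\<delta> / M > 0"
    using \<delta>(1) M(1) by simp
  then show ?thesis
  proof (rule eventually_mono[OF eventually_at_right_real])
    fix t :: real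
    assume t: "t \<in> {0<..<\<delta> / M}"
    show "\<forall>z\<in>K. norm ((f (b + t *\<^sub>R z) - f b) /\<^sub>R t - L z) \<le> \<eta>"
    proof
      fix z
      assume z: "z \<in> K"
      have tz: "norm (t *\<^sub>R z) \<le> t * M"
        using t M(2)[OF z] by (simp add: mult_left_mono)
      also have "\<dots> < \<delta>"
        using t M(1) by (simp add: field_simps)
      finally have "norm (t *\<^sub>R z) < \<delta>" .
      have "f (b + t *\<^sub>R z) - f b - L (t *\<^sub>R z)
          = t *\<^sub>R ((f (b + t *\<^sub>R z) - f b) /\<^sub>R t - L z)"
        using t linear_scale[OF has_derivative_linear[OF assms(1)]]
        by (simp add: algebra_simps)
      then have "t * norm ((f (b + t *\<^sub>R z) - f b) /\<^sub>R t - L z)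
          = norm (f (b + t *\<^sub>R z) - f b - L (t *\<^sub>R z))"
        using t by simp
      also have "\<dots> \<le> \<eta> / M * norm (t *\<^sub>R z)"
        using \<delta>(2)[of "b + t *\<^sub>R z"] \<open>norm (t *\<^sub>R z) < \<delta>\<close> by simp
      also have "\<dots> \<le> \<eta> / M * (t * M)"
        using tz assms(3) M(1) by (intro mult_left_mono) auto
      also have "\<dots> = t * \<eta>"
        using M(1) by simp
      finally show "norm ((f (b + t *\<^sub>R z) - f b) /\<^sub>R t - L z) \<le> \<eta>"
        using t by simp
    qed
  qed
qed

lemma norm_solve_conj_system_le:
  fixes p q r s X1 X2 z :: complex
  assumes "norm (X1 - (p * z + q * cnj z)) \<le> \<eta>" and "norm (X2 - (r * z + s * cnj z)) \<le> \<eta>"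
    and "p * s - q * r \<noteq> 0"
  shows "norm (((s * X1 - q * X2) / (p * s - q * r), (p * X2 - r * X1) / (p * s - q * r))
           - (z, cnj z)) \<le> (norm p + norm q + norm r + norm s) * \<eta> / norm (p * s - q * r)"
proof -
  define d where "d = p * s - q * r"
  define E1 where "E1 = X1 - (p * z + q * cnj z)"
  define E2 where "E2 = X2 - (r * z + s * cnj z)"
  have "((s * X1 - q * X2) / d, (p * X2 - r * X1) / d) - (z, cnj z)
      = ((s * E1 - q * E2) / d, (p * E2 - r * E1) / d)"
    using assms(3) by (simp add: d_def E1_def E2_def field_simps)
  also have "norm \<dots> \<le> (norm (s * E1 - q * E2) + norm (p * E2 - r * E1)) / norm d"
    using norm_Pair_le[of "(s * E1 - q * E2) / d" "(p * E2 - r * E1) / d"]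
    by (simp add: norm_divide add_divide_distrib)
  also have "\<dots> \<le> ((norm q + norm s) * \<eta> + (norm p + norm r) * \<eta>) / norm d"
  proof (intro divide_right_mono add_mono)
    show "norm (s * E1 - q * E2) \<le> (norm q + norm s) * \<eta>"
      using assms(1,2) norm_triangle_ineq4[of "s * E1" "q * E2"]
        mult_left_mono[of "norm E1" \<eta> "norm s"] mult_left_mono[of "norm E2" \<eta> "norm q"]
      by (simp add: E1_def E2_def norm_mult distrib_right)
    show "norm (p * E2 - r * E1) \<le> (norm p + norm r) * \<eta>"
      using assms(1,2) norm_triangle_ineq4[of "p * E2" "r * E1"]
        mult_left_mono[of "norm E2" \<eta> "norm p"] mult_left_mono[of "norm E1" \<eta> "norm r"]
      by (simp add: E1_def E2_def norm_mult distrib_right)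
  qed simp
  finally show ?thesis
    by (simp add: d_def algebra_simps)
qed

lemma affine_approx_conj_from_derivatives:
  fixes \<rho> L1 L2 :: "complex \<Rightarrow> complex"
  assumes d1: "(\<rho> has_derivative L1) (at b1)" and d2: "(\<rho> has_derivative L2) (at b2)"
    and L1: "\<And>z. L1 (e1 * z) = p * z + q * cnj z"
    and L2: "\<And>z. L2 (e2 * z) = r * z + s * cnj z"
    and det: "p * s - q * r \<noteq> 0" and "bounded K" and "\<epsilon> > 0"
  shows "\<exists>\<phi> \<psi>. C_affine_1_2 \<phi> \<and> C_affine_2_2 \<psi> \<and>
           (\<exists>\<delta> < \<epsilon>. \<forall>z\<in>K. norm ((\<psi> \<circ> pair_map \<rho> \<circ> \<phi>) z - (z, cnj z)) \<le> \<delta>)"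
proof -
  define d where "d = p * s - q * r"
  define S where "S = norm p + norm q + norm r + norm s"
  define \<eta> where "\<eta> = \<epsilon> * norm d / (S + 1)"
  have "S \<ge> 0" and "norm d > 0"
    using det by (auto simp: S_def d_def)
  then have "\<eta> > 0"
    using \<open>\<epsilon> > 0\<close> by (simp add: \<eta>_def)
  have "S * \<eta> / norm d = \<epsilon> * (S / (S + 1))"
    using \<open>S \<ge> 0\<close> \<open>norm d > 0\<close> by (simp add: \<eta>_def)
  also have "\<dots> < \<epsilon>"
    using \<open>S \<ge> 0\<close> \<open>\<epsilon> > 0\<close> mult_strict_left_mono[of "S / (S + 1)" 1 \<epsilon>] by simp
  finally have \<delta>_less: "S * \<eta> / norm d < \<epsilon>" .
  have bounded_dir: "bounded ((*) e ` K)" for e :: complex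
    using bounded_linear_image[OF \<open>bounded K\<close> bounded_linear_mult_right] .
  obtain t where "t > 0"
    and R1: "\<forall>w\<in>(*) e1 ` K. norm ((\<rho> (b1 + t *\<^sub>R w) - \<rho> b1) /\<^sub>R t - L1 w) \<le> \<eta>"
    and R2: "\<forall>w\<in>(*) e2 ` K. norm ((\<rho> (b2 + t *\<^sub>R w) - \<rho> b2) /\<^sub>R t - L2 w) \<le> \<eta>"
    using eventually_happens'[OF trivial_limit_at_right_real eventually_conj[OF
        eventually_at_right_less eventually_conj[OF
          has_derivative_uniform_rescaling[OF d1 bounded_dir \<open>\<eta> > 0\<close>]
          has_derivative_uniform_rescaling[OF d2 bounded_dir \<open>\<eta> > 0\<close>]]]]
    by blast
  define T where "T = complex_of_real t"
  have "T \<noteq> 0"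
    using \<open>t > 0\<close> by (simp add: T_def)
  define \<phi> where "\<phi> = (\<lambda>z. (b1 + T * e1 * z, b2 + T * e2 * z))"
  define \<psi> where "\<psi> = (\<lambda>(w1, w2). let X1 = (w1 - \<rho> b1) / T; X2 = (w2 - \<rho> b2) / T in
                        ((s * X1 - q * X2) / d, (p * X2 - r * X1) / d))"
  have "C_affine_1_2 \<phi>"
    unfolding C_affine_1_2_def \<phi>_def by (metis add.commute mult.assoc)
  moreover have "\<psi> (w1, w2) =
      (s / (T * d) * w1 + - q / (T * d) * w2 + (q * \<rho> b2 - s * \<rho> b1) / (T * d),
       - r / (T * d) * w1 + p / (T * d) * w2 + (r * \<rho> b1 - p * \<rho> b2) / (T * d))" for w1 w2
    using \<open>T \<noteq> 0\<close> \<open>norm d > 0\<close> by (simp add: \<psi>_def Let_def field_simps)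
  then have "C_affine_2_2 \<psi>"
    unfolding C_affine_2_2_def by blast
  moreover have "norm ((\<psi> \<circ> pair_map \<rho> \<circ> \<phi>) z - (z, cnj z)) \<le> S * \<eta> / norm d"
    if "z \<in> K" for z
  proof -
    have quotient: "(\<rho> (b + t *\<^sub>R (e * z)) - \<rho> b) /\<^sub>R t = (\<rho> (b + T * e * z) - \<rho> b) / T"
      for b e
      by (simp add: T_def scaleR_conv_of_real divide_inverse mult_ac)
    define X1 where "X1 = (\<rho> (b1 + T * e1 * z) - \<rho> b1) / T"
    define X2 where "X2 = (\<rho> (b2 + T * e2 * z) - \<rho> b2) / T"
    have "norm (X1 - (p * z + q * cnj z)) \<le> \<eta>"
      using bspec[OF R1 imageI[OF \<open>z \<in> K\<close>]] unfolding X1_def quotient L1 .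
    moreover have "norm (X2 - (r * z + s * cnj z)) \<le> \<eta>"
      using bspec[OF R2 imageI[OF \<open>z \<in> K\<close>]] unfolding X2_def quotient L2 .
    moreover have "(\<psi> \<circ> pair_map \<rho> \<circ> \<phi>) z = ((s * X1 - q * X2) / d, (p * X2 - r * X1) / d)"
      by (simp add: \<psi>_def \<phi>_def pair_map_def X1_def X2_def)
    ultimately show ?thesis
      using norm_solve_conj_system_le[OF _ _ det] by (simp add: d_def S_def)
  qed
  ultimately show ?thesis
    using \<delta>_less by blast
qed

lemma affine_approx_conj_at_point:
  fixes \<rho> L :: "complex \<Rightarrow> complex"
  assumes "(\<rho> has_derivative L) (at b)" and "wirtinger_z L \<noteq> 0" and "wirtinger_zbar L \<noteq> 0"
    and "bounded K" and "\<epsilon> > 0"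
  shows "\<exists>\<phi> \<psi>. C_affine_1_2 \<phi> \<and> C_affine_2_2 \<psi> \<and>
           (\<exists>\<delta> < \<epsilon>. \<forall>z\<in>K. norm ((\<psi> \<circ> pair_map \<rho> \<circ> \<phi>) z - (z, cnj z)) \<le> \<delta>)"
proof (rule affine_approx_conj_from_derivatives[OF assms(1) assms(1)])
  note L = linear_eq_wirtinger[OF has_derivative_linear[OF assms(1)]]
  show "L (1 * z) = wirtinger_z L * z + wirtinger_zbar L * cnj z" for z
    using L by simp
  show "L (\<i> * z) = (\<i> * wirtinger_z L) * z + (- \<i> * wirtinger_zbar L) * cnj z" for z
    using L[of "\<i> * z"] by simp
  show "wirtinger_z L * (- \<i> * wirtinger_zbar L) - wirtinger_zbar L * (\<i> * wirtinger_z L) \<noteq> 0"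
    using assms(2,3) by (simp add: algebra_simps)
qed (use assms in auto)

theorem proposition5p2:
  fixes \<rho> :: "complex \<Rightarrow> complex" and K :: "complex set" and \<epsilon> :: real
  assumes "C2_real \<rho>"
    and "\<not> \<rho> holomorphic_on UNIV"
    and "\<not> antiholomorphic_on \<rho> UNIV"
    and "\<not> real_affine_map \<rho>"
    and "compact K"
    and "\<epsilon> > 0"
  shows "\<exists>\<phi> \<psi>. C_affine_1_2 \<phi> \<and> C_affine_2_2 \<psi> \<and>
           (\<exists>\<delta> < \<epsilon>. \<forall>z\<in>K. norm ((\<psi> \<circ> pair_map \<rho> \<circ> \<phi>) z - (z, cnj z)) \<le> \<delta>)"
proof -
  obtain D :: "complex \<Rightarrow> complex \<Rightarrow>\<^sub>L complex"
    where "\<And>x. (\<rho> has_derivative blinfun_apply (D x)) (at x)"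
    using assms(1) unfolding C2_real_def by blast
  then obtain L where dL: "\<And>x. (\<rho> has_derivative L x) (at x)"
    by (rule that[of "\<lambda>x. blinfun_apply (D x)"])
  note L = linear_eq_wirtinger[OF has_derivative_linear[OF dL]]
  obtain b where b: "wirtinger_zbar (L b) \<noteq> 0"
    using holomorphic_if_wirtinger_zbar_zero[OF dL] assms(2) by blast
  obtain b' where b': "wirtinger_z (L b') \<noteq> 0"
    using antiholomorphic_if_wirtinger_z_zero[OF dL] assms(3) by blast
  have "bounded K"
    using assms(5) compact_imp_bounded by blast
  show ?thesis
  proof (cases "wirtinger_z (L b) = 0")
    case True
    show ?thesis
    proof (rule affine_approx_conj_from_derivatives[OF dL[of b'] dL[of b]])
      show "L b' (1 * z) = wirtinger_z (L b') * z + wirtinger_zbar (L b') * cnj z"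
        and "L b (1 * z) = wirtinger_z (L b) * z + wirtinger_zbar (L b) * cnj z" for z
        using L by simp_all
      show "wirtinger_z (L b') * wirtinger_zbar (L b) - wirtinger_zbar (L b') * wirtinger_z (L b)
          \<noteq> 0"
        using b b' True by simp
    qed (use \<open>bounded K\<close> assms(6) in auto)
  next
    case False
    show ?thesis
      using affine_approx_conj_at_point[OF dL False b \<open>bounded K\<close> assms(6)] .
  qed
qed

end
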